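(* Let $\Gamma=(V,E)$ be a simple graph of order $n$ and let $\mu$ be the algebraic connectivity of $\Gamma$. Then the defensive alliance number of $\Gamma$ satisfies $$a(\Gamma)\ge \left\lceil\frac{n\mu}{n+\mu}\right\rceil$$ and the strong defensive alliance number of $\Gamma$ satisfies $$\hat{a}(\Gamma)\ge \left\lceil\frac{n(\mu+1)}{n+\mu}\right\rceil.$$
   Context: For $S\subseteq V$ and $v\in V$, $N_S(v)=\{u\in S: u\sim v\}$ and $N_{V\setminus S}(v)=\{u\in V\setminus S: u\sim v\}$. A nonempty set $S\subseteq V$ is a defensive alliance if $|N_S(v)|+1\ge |N_{V\setminus S}(v)|$ for every $v\in S$; it is a strong defensive alliance if $|N_S(v)|\ge |N_{V\setminus S}(v)|$ for every $v\in S$. $a(\Gamma)$ (resp. $\hat a(\Gamma)$) is the minimum cardinality of a defensive (resp. strong defensive) alliance in $\Gamma$. The algebraic connectivity is the second smallest eigenvalue of the Laplacian matrix of $\Gamma$. *)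

theory Defs
  imports "Jordan_Normal_Form.Char_Poly"
begin

definition simple_graph :: "nat \<Rightarrow> (nat \<Rightarrow> nat \<Rightarrow> bool) \<Rightarrow> bool" where
  "simple_graph n E \<longleftrightarrow> (\<forall>u v. E u v \<longrightarrow> u < n \<and> v < n) \<and> (\<forall>u v. E u v \<longrightarrow> E v u) \<and> (\<forall>u. \<not> E u u)"

definition nbhd :: "(nat \<Rightarrow> nat \<Rightarrow> bool) \<Rightarrow> nat set \<Rightarrow> nat \<Rightarrow> nat set" where
  "nbhd E S v = {u \<in> S. E u v}"

definition degree :: "nat \<Rightarrow> (nat \<Rightarrow> nat \<Rightarrow> bool) \<Rightarrow> nat \<Rightarrow> nat" where
  "degree n E v = card (nbhd E {0..<n} v)"

definition laplacian :: "nat \<Rightarrow> (nat \<Rightarrow> nat \<Rightarrow> bool) \<Rightarrow> real mat" where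
  "laplacian n E = mat n n (\<lambda>(i, j). if i = j then real (degree n E i)
                                       else if E i j then -1 else 0)"

text \<open>The eigenvalues of L, listed in increasing order with (algebraic) multiplicity:
  the unique sorted list of reals whose linear factors multiply to the characteristic polynomial.\<close>
definition laplacian_spectrum :: "nat \<Rightarrow> (nat \<Rightarrow> nat \<Rightarrow> bool) \<Rightarrow> real list" where
  "laplacian_spectrum n E = (THE es. sorted es \<and>
      char_poly (laplacian n E) = prod_list (map (\<lambda>e. [:- e, 1:]) es))"

definition algebraic_connectivity :: "nat \<Rightarrow> (nat \<Rightarrow> nat \<Rightarrow> bool) \<Rightarrow> real" where
  "algebraic_connectivity n E = laplacian_spectrum n E ! 1"

definition defensive_alliance :: "nat \<Rightarrow> (nat \<Rightarrow> nat \<Rightarrow> bool) \<Rightarrow> nat set \<Rightarrow> bool" where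
  "defensive_alliance n E S \<longleftrightarrow> S \<noteq> {} \<and> S \<subseteq> {0..<n} \<and>
     (\<forall>v\<in>S. card (nbhd E S v) + 1 \<ge> card (nbhd E ({0..<n} - S) v))"

definition strong_defensive_alliance :: "nat \<Rightarrow> (nat \<Rightarrow> nat \<Rightarrow> bool) \<Rightarrow> nat set \<Rightarrow> bool" where
  "strong_defensive_alliance n E S \<longleftrightarrow> S \<noteq> {} \<and> S \<subseteq> {0..<n} \<and>
     (\<forall>v\<in>S. card (nbhd E S v) \<ge> card (nbhd E ({0..<n} - S) v))"

definition alliance_number :: "nat \<Rightarrow> (nat \<Rightarrow> nat \<Rightarrow> bool) \<Rightarrow> nat" where
  "alliance_number n E = Min {card S | S. defensive_alliance n E S}"

definition strong_alliance_number :: "nat \<Rightarrow> (nat \<Rightarrow> nat \<Rightarrow> bool) \<Rightarrow> nat" where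
  "strong_alliance_number n E = Min {card S | S. strong_defensive_alliance n E S}"

end

(* Let S be a (strong) defensive alliance, s = |S|, and test the Laplacian L on the centred
   indicator vector x = 1_S - (s/n) 1.  Since L 1 = 0 and x is orthogonal to 1, diagonalizing L
   orthogonally gives mu (x . x) <= (L x) . x for the second smallest eigenvalue mu.  Here
   x . x = s (n - s) / n, while (L x) . x counts the edges leaving S, i.e. it is the sum over
   v in S of |N_(V-S)(v)|.  As |N_S(v)| <= s - 1, the alliance condition bounds each term by s - t
   with t = 0 (resp. t = 1 for a strong alliance), and mu s (n - s) / n <= s (s - t) rearranges
   to s >= n (mu + t) / (n + mu).

   The orthogonal diagonalization is proved by induction on the dimension: a real symmetric
   matrix has a real eigenvalue, and conjugating by an orthogonal matrix whose first column is a
   unit eigenvector splits off a 1 x 1 block. *)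

theory Submission
  imports Defs "Jordan_Normal_Form.Schur_Decomposition"
begin

section \<open>Orthogonal diagonalization of real symmetric matrices\<close>

definition orthogonal_matrix :: "nat \<Rightarrow> 'a :: comm_ring_1 mat \<Rightarrow> bool" where
  "orthogonal_matrix n P \<longleftrightarrow>
     P \<in> carrier_mat n n \<and> P * transpose_mat P = 1\<^sub>m n \<and> transpose_mat P * P = 1\<^sub>m n"

lemma orthogonal_matrixI:
  fixes P :: "'a :: field mat"
  assumes P: "P \<in> carrier_mat n n" and PTP: "transpose_mat P * P = 1\<^sub>m n"
  shows "orthogonal_matrix n P"
  unfolding orthogonal_matrix_def
  using P PTP mat_mult_left_right_inverse[OF _ P PTP] by auto

lemma orthogonal_matrix_mult:
  assumes "orthogonal_matrix n P" and "orthogonal_matrix n Q"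
  shows "orthogonal_matrix n (P * Q)"
proof -
  have P: "P \<in> carrier_mat n n" "P * transpose_mat P = 1\<^sub>m n" "transpose_mat P * P = 1\<^sub>m n"
    and Q: "Q \<in> carrier_mat n n" "Q * transpose_mat Q = 1\<^sub>m n" "transpose_mat Q * Q = 1\<^sub>m n"
    using assms unfolding orthogonal_matrix_def by auto
  have T: "transpose_mat (P * Q) = transpose_mat Q * transpose_mat P"
    using P Q by (intro transpose_mult) auto
  have "P * Q * transpose_mat (P * Q) = P * (Q * transpose_mat Q) * transpose_mat P"
    unfolding T using P(1) Q(1) by (simp add: assoc_mult_mat[of _ n n _ n _ n])
  also have "\<dots> = 1\<^sub>m n" using P Q by simp
  finally have "P * Q * transpose_mat (P * Q) = 1\<^sub>m n" .
  moreover have "transpose_mat (P * Q) * (P * Q) = transpose_mat Q * (transpose_mat P * P) * Q"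
    unfolding T using P(1) Q(1) by (simp add: assoc_mult_mat[of _ n n _ n _ n])
  ultimately show ?thesis using P Q unfolding orthogonal_matrix_def by auto
qed

lemma orthogonal_matrix_one_block:
  assumes "orthogonal_matrix m P"
  shows "orthogonal_matrix (Suc m) (four_block_mat (1\<^sub>m 1) (0\<^sub>m 1 m) (0\<^sub>m m 1) P)"
proof -
  have P: "P \<in> carrier_mat m m" "P * transpose_mat P = 1\<^sub>m m" "transpose_mat P * P = 1\<^sub>m m"
    using assms unfolding orthogonal_matrix_def by auto
  have T: "transpose_mat (four_block_mat (1\<^sub>m 1) (0\<^sub>m 1 m) (0\<^sub>m m 1) P) =
      four_block_mat (1\<^sub>m 1) (0\<^sub>m 1 m) (0\<^sub>m m 1) (transpose_mat P)"
    using P by (subst transpose_four_block_mat) auto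
  show ?thesis unfolding orthogonal_matrix_def T using P
    by (auto simp: mult_four_block_mat[of _ 1 1 _ m _ m _ _ 1 _ m])
qed

lemma orthogonal_matrix_scalar_prod:
  assumes "orthogonal_matrix n P" and u: "u \<in> carrier_vec n" and w: "w \<in> carrier_vec n"
  shows "(transpose_mat P *\<^sub>v u) \<bullet> (transpose_mat P *\<^sub>v w) = u \<bullet> w"
proof -
  have P: "P \<in> carrier_mat n n" "P * transpose_mat P = 1\<^sub>m n"
    using assms unfolding orthogonal_matrix_def by auto
  have "(transpose_mat P *\<^sub>v u) \<bullet> (transpose_mat P *\<^sub>v w) = u \<bullet> (P *\<^sub>v (transpose_mat P *\<^sub>v w))"
    using transpose_vec_mult_scalar[OF P(1), of "transpose_mat P *\<^sub>v w" u] u w P by simp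
  also have "P *\<^sub>v (transpose_mat P *\<^sub>v w) = w"
    using P w by (simp flip: assoc_mult_mat_vec[of _ n n _ n])
  finally show ?thesis .
qed

lemma orthogonal_matrix_normalized_cols:
  fixes ws :: "real vec list"
  assumes ws: "set ws \<subseteq> carrier_vec n" "corthogonal ws" "length ws = n"
  defines "W \<equiv> mat_of_cols n (map (\<lambda>w. (1 / sqrt (w \<bullet> w)) \<cdot>\<^sub>v w) ws)"
  shows "orthogonal_matrix n W" and "\<And>i. i < n \<Longrightarrow> col W i = (1 / sqrt (ws ! i \<bullet> ws ! i)) \<cdot>\<^sub>v ws ! i"
proof -
  define ws' where "ws' = map (\<lambda>w. (1 / sqrt (w \<bullet> w)) \<cdot>\<^sub>v w) ws"
  have W: "W \<in> carrier_mat n n"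
    using mat_of_cols_carrier(1)[of n ws'] ws(3) unfolding W_def ws'_def by simp
  show col_W: "col W i = (1 / sqrt (ws ! i \<bullet> ws ! i)) \<cdot>\<^sub>v ws ! i" if "i < n" for i
  proof -
    have "ws ! i \<in> carrier_vec n" using that ws by auto
    then show ?thesis unfolding W_def using that ws(3) by (subst col_mat_of_cols) auto
  qed
  have ws_pos: "ws ! i \<bullet> ws ! i > 0" if "i < n" for i
    using corthogonalD[OF ws(2), of i i] conjugate_square_ge_0_vec[of "ws ! i"] that ws
    by (simp add: order_le_less)
  have cols_orth: "col W i \<bullet> col W j = (if i = j then 1 else 0)" if "i < n" "j < n" for i j
  proof -
    have "ws ! i \<in> carrier_vec n" "ws ! j \<in> carrier_vec n" using ws that by auto
    moreover have "ws ! i \<bullet> ws ! j = 0 \<longleftrightarrow> i \<noteq> j" using corthogonalD[OF ws(2)] that ws(3) by simp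
    ultimately show ?thesis using that ws_pos[OF that(1)]
      by (auto simp: col_W smult_scalar_prod_distrib scalar_prod_smult_distrib[of _ n]
          power2_eq_square[symmetric])
  qed
  have "transpose_mat W * W = 1\<^sub>m n"
    by (rule eq_matI) (use W in \<open>auto simp: cols_orth\<close>)
  with W show "orthogonal_matrix n W" by (rule orthogonal_matrixI)
qed

lemma orthogonal_matrix_with_first_col:
  fixes u :: "real vec"
  assumes u: "u \<in> carrier_vec n" and uu: "u \<bullet> u = 1"
  obtains W where "orthogonal_matrix n W" and "col W 0 = u"
proof -
  have u0: "u \<noteq> 0\<^sub>v n" using uu u by auto
  then have n: "n > 0" using u by (cases n) auto
  interpret cof_vec_space n "TYPE(real)" .
  define b where "b = basis_completion u"
  from basis_completion[OF u u0, folded b_def]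
  have b: "set b \<subseteq> carrier_vec n" "distinct b" "\<not> lin_dep (set b)" "length b = n"
    and hd_b: "hd b = u" by auto
  obtain bs where b_Cons: "b = u # bs" using hd_b b(4) n by (cases b) auto
  define ws where "ws = gram_schmidt n b"
  from gram_schmidt_result[OF b(1-3) ws_def]
  have ws: "set ws \<subseteq> carrier_vec n" "corthogonal ws" "length ws = n" by (auto simp: b(4))
  have "ws ! 0 = u" using u ws(3) n unfolding ws_def b_Cons
    by (metis gram_schmidt_hd hd_conv_nth length_0_conv less_not_refl2)
  then show thesis using orthogonal_matrix_normalized_cols[OF ws] n uu that by simp
qed

text \<open>The Hermitian form \<open>v\<^sup>* A v\<close> of a real symmetric \<open>A\<close> is real and equals \<open>a |v|\<^sup>2\<close>.\<close>

lemma real_symmetric_mat_complex_eigenvalue_real: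
  fixes A :: "real mat"
  assumes A: "A \<in> carrier_mat n n" and sym: "transpose_mat A = A"
    and a: "eigenvalue (map_mat complex_of_real A) a"
  shows "a \<in> \<real>"
proof -
  let ?A = "\<lambda>i j. complex_of_real (A $$ (i, j))"
  obtain v where v: "v \<in> carrier_vec n" "v \<noteq> 0\<^sub>v n"
    and Av: "map_mat complex_of_real A *\<^sub>v v = a \<cdot>\<^sub>v v"
    using a A unfolding eigenvalue_def eigenvector_def by auto
  have Av_i: "(\<Sum>j<n. ?A i j * v $ j) = a * v $ i" if "i < n" for i
    using arg_cong[OF Av, of "\<lambda>w. w $ i"] that A v(1)
    by (simp add: scalar_prod_def lessThan_atLeast0 mult.commute)
  define N where "N = (\<Sum>i<n. cnj (v $ i) * v $ i)"
  define S where "S = (\<Sum>i<n. \<Sum>j<n. cnj (v $ i) * ?A i j * v $ j)"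
  have "S = (\<Sum>i<n. cnj (v $ i) * (\<Sum>j<n. ?A i j * v $ j))"
    unfolding S_def by (simp add: sum_distrib_left mult.assoc)
  also have "\<dots> = (\<Sum>i<n. cnj (v $ i) * (a * v $ i))" by (intro sum.cong refl) (simp add: Av_i)
  also have "\<dots> = a * N" unfolding N_def by (simp add: sum_distrib_left algebra_simps)
  finally have "S = a * N" .
  moreover have "cnj S = S"
  proof -
    have A_sym: "A $$ (i, j) = A $$ (j, i)" if "i < n" "j < n" for i j
      using arg_cong[OF sym, of "\<lambda>M. M $$ (i, j)"] that A by auto
    have "cnj S = (\<Sum>i<n. \<Sum>j<n. cnj (v $ j) * ?A j i * v $ i)"
      unfolding S_def by (auto simp: A_sym algebra_simps intro!: sum.cong)
    also have "\<dots> = S" unfolding S_def by (rule sum.swap)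
    finally show ?thesis .
  qed
  moreover have N_real: "N = complex_of_real (\<Sum>i<n. (cmod (v $ i))\<^sup>2)"
    unfolding N_def of_real_sum by (intro sum.cong refl) (simp only: complex_norm_square mult.commute)
  moreover have "N \<noteq> 0"
  proof
    assume "N = 0"
    then have "\<forall>i\<in>{..<n}. (cmod (v $ i))\<^sup>2 = 0"
      unfolding N_real of_real_eq_0_iff by (subst (asm) sum_nonneg_eq_0_iff) auto
    then have "v = 0\<^sub>v n" using v(1) by (intro eq_vecI) auto
    with v(2) show False ..
  qed
  ultimately have "cnj a = a" by (metis complex_cnj_complex_of_real complex_cnj_mult mult_cancel_right)
  then show ?thesis using Reals_cnj_iff by blast
qed

lemma real_symmetric_mat_has_eigenvalue:
  fixes A :: "real mat"
  assumes A: "A \<in> carrier_mat n n" and sym: "transpose_mat A = A" and n: "n > 0"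
  obtains e where "eigenvalue A e"
proof -
  let ?A = "map_mat complex_of_real A"
  have A': "?A \<in> carrier_mat n n" using A by simp
  obtain as where cp: "char_poly ?A = (\<Prod>a\<leftarrow>as. [:- a, 1:])" and "length as = n"
    using char_poly_factorized[OF A'] by blast
  then obtain a as' where "as = a # as'" using n by (cases as) auto
  then have "poly (char_poly ?A) a = 0" unfolding cp by simp
  then have "eigenvalue ?A a" using eigenvalue_root_char_poly[OF A'] by simp
  then have a_real: "a = complex_of_real (Re a)"
    using real_symmetric_mat_complex_eigenvalue_real[OF A sym] by (simp add: complex_is_Real_iff)
  have "complex_of_real (poly (char_poly A) (Re a)) = poly (char_poly ?A) a"
    by (subst a_real) (simp add: of_real_hom.char_poly_hom[OF A])
  with \<open>poly (char_poly ?A) a = 0\<close> have "poly (char_poly A) (Re a) = 0" by simp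
  then show thesis using that eigenvalue_root_char_poly[OF A] by blast
qed

lemma eigenvalue_unit_eigenvector:
  fixes A :: "real mat"
  assumes A: "A \<in> carrier_mat n n" and "eigenvalue A e"
  obtains u where "u \<in> carrier_vec n" and "u \<bullet> u = 1" and "A *\<^sub>v u = e \<cdot>\<^sub>v u"
proof -
  obtain v where v: "v \<in> carrier_vec n" "v \<noteq> 0\<^sub>v n" and Av: "A *\<^sub>v v = e \<cdot>\<^sub>v v"
    using assms unfolding eigenvalue_def eigenvector_def by auto
  have "v \<bullet> v > 0" using conjugate_square_greater_0_vec[OF v(1)] v(2) by simp
  then show thesis
    using that[of "(1 / sqrt (v \<bullet> v)) \<cdot>\<^sub>v v"] v Av A
    by (auto simp: smult_scalar_prod_distrib scalar_prod_smult_distrib[of _ n] mult_mat_vec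
        power2_eq_square[symmetric] smult_smult_assoc mult.commute)
qed

lemma orthogonal_matrix_conj_cancel:
  assumes "orthogonal_matrix n W" and A: "A \<in> carrier_mat n n"
  shows "A = W * (transpose_mat W * A * W) * transpose_mat W"
proof -
  have W: "W \<in> carrier_mat n n" and W_WT: "W * transpose_mat W = 1\<^sub>m n"
    using assms(1) unfolding orthogonal_matrix_def by auto
  have "A = (W * transpose_mat W) * A * (W * transpose_mat W)" using A by (simp add: W_WT)
  also have "\<dots> = W * (transpose_mat W * A * W) * transpose_mat W"
    using A W by (simp add: assoc_mult_mat[of _ n n _ n _ n])
  finally show ?thesis .
qed

lemma transpose_conj_symmetric:
  fixes A :: "'a :: comm_ring_1 mat"
  assumes A: "A \<in> carrier_mat n n" and W: "W \<in> carrier_mat n k" and sym: "transpose_mat A = A"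
  shows "transpose_mat (transpose_mat W * A * W) = transpose_mat W * A * W"
proof -
  have "transpose_mat (transpose_mat W * A * W) = transpose_mat W * transpose_mat (transpose_mat W * A)"
    using A W by (intro transpose_mult) auto
  also have "transpose_mat (transpose_mat W * A) = A * W"
    using A W sym by (subst transpose_mult) auto
  finally show ?thesis using A W by (simp add: assoc_mult_mat[of _ k n _ n _ k])
qed

lemma four_block_mat_conj_one_block:
  fixes P D :: "'a :: comm_ring_1 mat"
  assumes P: "P \<in> carrier_mat m m" and D: "D \<in> carrier_mat m m"
  shows "four_block_mat (1\<^sub>m 1) (0\<^sub>m 1 m) (0\<^sub>m m 1) P * four_block_mat (mat 1 1 (\<lambda>_. e)) (0\<^sub>m 1 m) (0\<^sub>m m 1) D
      * transpose_mat (four_block_mat (1\<^sub>m 1) (0\<^sub>m 1 m) (0\<^sub>m m 1) P)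
    = four_block_mat (mat 1 1 (\<lambda>_. e)) (0\<^sub>m 1 m) (0\<^sub>m m 1) (P * D * transpose_mat P)"
proof -
  have "transpose_mat (four_block_mat (1\<^sub>m 1) (0\<^sub>m 1 m) (0\<^sub>m m 1) P) =
      four_block_mat (1\<^sub>m 1) (0\<^sub>m 1 m) (0\<^sub>m m 1) (transpose_mat P)"
    using P by (subst transpose_four_block_mat) auto
  moreover have "mat 1 1 (\<lambda>_. e) \<in> carrier_mat 1 1" by simp
  ultimately show ?thesis using P D by (simp add: mult_four_block_mat[of _ 1 1 _ m _ m _ _ 1 _ m])
qed

lemma orthogonal_conj_eigenvector_block:
  fixes A :: "real mat"
  assumes A: "A \<in> carrier_mat (Suc m) (Suc m)" and sym: "transpose_mat A = A"
    and W: "orthogonal_matrix (Suc m) W" and eig: "A *\<^sub>v col W 0 = e \<cdot>\<^sub>v col W 0"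
  obtains B where "B \<in> carrier_mat m m" and "transpose_mat B = B"
    and "transpose_mat W * A * W = four_block_mat (mat 1 1 (\<lambda>_. e)) (0\<^sub>m 1 m) (0\<^sub>m m 1) B"
proof -
  let ?n = "Suc m"
  define A' where "A' = transpose_mat W * A * W"
  have W_carrier: "W \<in> carrier_mat ?n ?n" and WTW: "transpose_mat W * W = 1\<^sub>m ?n"
    using W unfolding orthogonal_matrix_def by auto
  have A'_carrier: "A' \<in> carrier_mat ?n ?n" unfolding A'_def using A W_carrier by auto
  have cols_orth: "col W i \<bullet> col W j = (if i = j then 1 else 0)" if "i < ?n" "j < ?n" for i j
    using arg_cong[OF WTW, of "\<lambda>M. M $$ (i, j)"] that W_carrier by simp
  have sym': "transpose_mat A' = A'" unfolding A'_def by (rule transpose_conj_symmetric[OF A W_carrier sym])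
  have sym'_entry: "A' $$ (i, j) = A' $$ (j, i)" if "i < ?n" "j < ?n" for i j
    using arg_cong[OF sym', of "\<lambda>M. M $$ (i, j)"] that A'_carrier by simp
  have col0: "A' $$ (i, 0) = (if i = 0 then e else 0)" if i: "i < ?n" for i
  proof -
    have "A' $$ (i, 0) = row (transpose_mat W) i \<bullet> col (A * W) 0"
      unfolding A'_def using A W_carrier i by (simp add: assoc_mult_mat[of _ ?n ?n _ ?n _ ?n])
    also have "row (transpose_mat W) i = col W i" using W_carrier i by simp
    also have "col (A * W) 0 = A *\<^sub>v col W 0" by (rule col_mult2[OF A W_carrier]) simp
    also have "col W i \<bullet> (A *\<^sub>v col W 0) = e * (col W i \<bullet> col W 0)"
      using W_carrier i by (simp add: eig)
    finally show ?thesis using cols_orth[OF i, of 0] by simp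
  qed
  define B where "B = mat m m (\<lambda>(i, j). A' $$ (Suc i, Suc j))"
  have "B \<in> carrier_mat m m" unfolding B_def by simp
  moreover have "transpose_mat B = B" unfolding B_def by (intro eq_matI) (auto simp: sym'_entry)
  moreover have "A' = four_block_mat (mat 1 1 (\<lambda>_. e)) (0\<^sub>m 1 m) (0\<^sub>m m 1) B"
  proof (rule eq_matI)
    fix i j assume "i < dim_row (four_block_mat (mat 1 1 (\<lambda>_. e)) (0\<^sub>m 1 m) (0\<^sub>m m 1) B)"
      and "j < dim_col (four_block_mat (mat 1 1 (\<lambda>_. e)) (0\<^sub>m 1 m) (0\<^sub>m m 1) B)"
    then show "A' $$ (i, j) = four_block_mat (mat 1 1 (\<lambda>_. e)) (0\<^sub>m 1 m) (0\<^sub>m m 1) B $$ (i, j)"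
      using col0 col0[of j] sym'_entry[of 0 j] by (cases i; cases j) (auto simp: B_def)
  qed (use A'_carrier in \<open>auto simp: B_def\<close>)
  ultimately show thesis unfolding A'_def by (rule that)
qed

theorem real_symmetric_mat_orthogonal_diagonalization:
  fixes A :: "real mat"
  assumes "A \<in> carrier_mat n n" and "transpose_mat A = A"
  obtains P D where "orthogonal_matrix n P" and "D \<in> carrier_mat n n" and "diagonal_mat D"
    and "A = P * D * transpose_mat P"
  using assms
proof (induction n arbitrary: A thesis)
  case 0
  show ?case
    by (rule "0.prems"(1)[of "1\<^sub>m 0" A]) (use "0.prems" in \<open>auto simp: orthogonal_matrix_def diagonal_mat_def\<close>)
next
  case (Suc m)
  let ?n = "Suc m"
  have A: "A \<in> carrier_mat ?n ?n" and sym: "transpose_mat A = A" by fact+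
  obtain e where "eigenvalue A e" using real_symmetric_mat_has_eigenvalue[OF A sym] by auto
  then obtain u where u: "u \<in> carrier_vec ?n" "u \<bullet> u = 1" "A *\<^sub>v u = e \<cdot>\<^sub>v u"
    by (rule eigenvalue_unit_eigenvector[OF A])
  obtain W where W: "orthogonal_matrix ?n W" and "col W 0 = u"
    using orthogonal_matrix_with_first_col[OF u(1,2)] .
  then obtain B where B: "B \<in> carrier_mat m m" "transpose_mat B = B"
    and A_W: "transpose_mat W * A * W = four_block_mat (mat 1 1 (\<lambda>_. e)) (0\<^sub>m 1 m) (0\<^sub>m m 1) B"
    using orthogonal_conj_eigenvector_block[OF A sym] u(3) by metis
  obtain P' D' where P': "orthogonal_matrix m P'" and D': "D' \<in> carrier_mat m m" "diagonal_mat D'"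
    and B_eq: "B = P' * D' * transpose_mat P'"
    using Suc.IH[OF _ B] by blast
  define Q where "Q = four_block_mat (1\<^sub>m 1) (0\<^sub>m 1 m) (0\<^sub>m m 1) P'"
  define D where "D = four_block_mat (mat 1 1 (\<lambda>_. e)) (0\<^sub>m 1 m) (0\<^sub>m m 1) D'"
  have Q: "orthogonal_matrix ?n Q" unfolding Q_def by (rule orthogonal_matrix_one_block[OF P'])
  have P'_carrier: "P' \<in> carrier_mat m m" using P' unfolding orthogonal_matrix_def by auto
  have D: "D \<in> carrier_mat ?n ?n" "diagonal_mat D"
    using D' unfolding D_def diagonal_mat_def by auto
  have Q_D: "transpose_mat W * A * W = Q * D * transpose_mat Q"
    unfolding A_W B_eq Q_def D_def by (rule four_block_mat_conj_one_block[OF P'_carrier D'(1), symmetric])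
  have W_carrier: "W \<in> carrier_mat ?n ?n" and Q_carrier: "Q \<in> carrier_mat ?n ?n"
    using W Q unfolding orthogonal_matrix_def by auto
  have "A = W * (transpose_mat W * A * W) * transpose_mat W"
    by (rule orthogonal_matrix_conj_cancel[OF W A])
  also have "\<dots> = (W * Q) * D * transpose_mat (W * Q)"
    unfolding Q_D using W_carrier Q_carrier D
    by (simp add: transpose_mult[of _ ?n ?n] assoc_mult_mat[of _ ?n ?n _ ?n _ ?n])
  finally have "A = (W * Q) * D * transpose_mat (W * Q)" .
  then show ?case using Suc.prems(1) orthogonal_matrix_mult[OF W Q] D by blast
qed

section \<open>The second smallest eigenvalue of a positive semidefinite matrix\<close>

lemma proots_prod_linear_factors: "proots (\<Prod>e\<leftarrow>es. [:- e, 1:]) = mset (es :: real list)"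
proof (induction es)
  case (Cons e es)
  have "(\<Prod>e\<leftarrow>es. [:- e, 1:]) \<noteq> (0 :: real poly)" by (auto simp: prod_list_zero_iff)
  then have "proots (\<Prod>e\<leftarrow>e # es. [:- e, 1:]) = proots [:- e, 1:] + proots (\<Prod>e\<leftarrow>es. [:- e, 1:])"
    by (simp only: list.map prod_list.Cons, intro proots_mult) auto
  also have "proots [:- e, 1:] = {#e#}" using proots_linear_factor[of "- e"] by simp
  finally show ?case using Cons by simp
qed simp

lemma sorted_linear_factors_unique:
  fixes es es' :: "real list"
  assumes "sorted es" and "sorted es'" and "(\<Prod>e\<leftarrow>es. [:- e, 1:]) = (\<Prod>e\<leftarrow>es'. [:- e, 1:])"
  shows "es = es'"
proof -
  have "mset es = mset es'"
    using arg_cong[OF assms(3), of proots] by (simp add: proots_prod_linear_factors)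
  then show ?thesis using assms(1,2) properties_for_sort by metis
qed

lemma prod_linear_factors_sort:
  "(\<Prod>e\<leftarrow>sort es. [:- e, 1:]) = (\<Prod>e\<leftarrow>es. [:- e, 1:] :: real poly)"
  by (subst prod_mset_prod_list[symmetric])+ (simp only: mset_map mset_sort)

lemma char_poly_orthogonal_diagonalization:
  fixes D :: "real mat"
  assumes "orthogonal_matrix n P" and D: "D \<in> carrier_mat n n" "diagonal_mat D"
  shows "char_poly (P * D * transpose_mat P) = (\<Prod>e\<leftarrow>diag_mat D. [:- e, 1:])"
proof -
  have "similar_mat (P * D * transpose_mat P) D"
    using assms unfolding similar_mat_def similar_mat_wit_def orthogonal_matrix_def
    by (intro exI[of _ P] exI[of _ "transpose_mat P"]) auto
  then have "char_poly (P * D * transpose_mat P) = char_poly D" by (rule char_poly_similar)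
  also have "\<dots> = (\<Prod>e\<leftarrow>diag_mat D. [:- e, 1:])"
    using D by (intro char_poly_upper_triangular[of _ n]) (auto simp: upper_triangular_def diagonal_mat_def)
  finally show ?thesis .
qed

lemma real_symmetric_mat_char_poly_sorted_factors:
  fixes A :: "real mat"
  assumes "A \<in> carrier_mat n n" and "transpose_mat A = A"
  shows "\<exists>!es. sorted es \<and> char_poly A = (\<Prod>e\<leftarrow>es. [:- e, 1:])"
proof -
  obtain P D where "orthogonal_matrix n P" "D \<in> carrier_mat n n" "diagonal_mat D"
    and A: "A = P * D * transpose_mat P"
    using real_symmetric_mat_orthogonal_diagonalization[OF assms] .
  then have "char_poly A = (\<Prod>e\<leftarrow>diag_mat D. [:- e, 1:])"
    by (simp add: char_poly_orthogonal_diagonalization)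
  also have "\<dots> = (\<Prod>e\<leftarrow>sort (diag_mat D). [:- e, 1:])"
    by (rule prod_linear_factors_sort[symmetric])
  finally show ?thesis using sorted_linear_factors_unique by (intro ex1I[of _ "sort (diag_mat D)"]) auto
qed

lemma eigenvalue_nonneg_if_psd:
  fixes A :: "real mat"
  assumes A: "A \<in> carrier_mat n n" and psd: "\<And>w. w \<in> carrier_vec n \<Longrightarrow> (A *\<^sub>v w) \<bullet> w \<ge> 0"
    and "eigenvalue A e"
  shows "e \<ge> 0"
proof -
  obtain v where v: "v \<in> carrier_vec n" "v \<noteq> 0\<^sub>v n" and Av: "A *\<^sub>v v = e \<cdot>\<^sub>v v"
    using assms unfolding eigenvalue_def eigenvector_def by auto
  have "v \<bullet> v > 0" using conjugate_square_greater_0_vec[OF v(1)] v(2) by simp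
  moreover have "0 \<le> e * (v \<bullet> v)" using psd[OF v(1)] v(1) by (simp add: Av)
  ultimately show ?thesis by (simp add: zero_le_mult_iff)
qed

lemma linear_factor_root_eigenvalue:
  assumes "A \<in> carrier_mat n n" and "char_poly A = (\<Prod>e\<leftarrow>es. [:- e, 1:])" and "e \<in> set es"
  shows "eigenvalue A (e :: real)"
  using assms by (auto simp: eigenvalue_root_char_poly poly_prod_list_zero_iff)

lemma card_below_second_smallest:
  fixes ds :: "'a :: linorder list"
  assumes "length ds \<ge> 2"
  shows "card {i. i < length ds \<and> ds ! i < sort ds ! 1} \<le> 1"
proof -
  define m where "m = sort ds ! 1"
  have "Suc (Suc 0) \<le> length (sort ds)" using assms by simp
  then obtain a b rest where sorted_ds: "sort ds = a # b # rest"
    by (auto simp only: Suc_le_length_iff)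
  then have "\<forall>x\<in>set rest. m \<le> x" unfolding m_def using sorted_sort[of ds] by simp
  then have "filter (\<lambda>x. x < m) (sort ds) = filter (\<lambda>x. x < m) [a]"
    unfolding sorted_ds m_def by (auto simp: filter_empty_conv not_less)
  then have "length (filter (\<lambda>x. x < m) (sort ds)) \<le> 1" by simp
  then have "length (filter (\<lambda>x. x < m) ds) \<le> 1" by (simp add: filter_sort)
  then show ?thesis unfolding m_def by (simp add: length_filter_conv_card)
qed

text \<open>At most one weight lies below the second smallest one, and there \<open>z\<close> is concentrated,
  so orthogonality to \<open>z\<close> forces \<open>y\<close> to vanish at that index.\<close>

lemma second_smallest_weighted_sum_le:
  fixes ds :: "real list" and y z :: "nat \<Rightarrow> real"
  assumes len: "length ds = n" and n: "n \<ge> 2" and nonneg: "\<And>i. i < n \<Longrightarrow> ds ! i \<ge> 0"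
    and ker: "\<And>i. i < n \<Longrightarrow> ds ! i * z i = 0" and z: "\<exists>i<n. z i \<noteq> 0"
    and orth: "(\<Sum>i<n. z i * y i) = 0"
  shows "sort ds ! 1 * (\<Sum>i<n. (y i)\<^sup>2) \<le> (\<Sum>i<n. ds ! i * (y i)\<^sup>2)"
proof -
  define m where "m = sort ds ! 1"
  have at_most_one_below: "card {i. i < n \<and> ds ! i < m} \<le> 1"
    using card_below_second_smallest[of ds] len n unfolding m_def by simp
  have y_zero: "y i = 0" if i: "i < n" and below: "ds ! i < m" for i
  proof -
    have z_other: "z j = 0" if j: "j < n" "j \<noteq> i" for j
    proof -
      have "\<not> ds ! j < m"
      proof
        assume "ds ! j < m"
        then have "{i, j} \<subseteq> {i. i < n \<and> ds ! i < m}" using i j below by auto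
        from card_mono[OF _ this] at_most_one_below j show False by simp
      qed
      then have "ds ! j > 0" using nonneg[OF i] below by linarith
      then show ?thesis using ker[OF j(1)] by simp
    qed
    then have "z i \<noteq> 0" using z by blast
    moreover have "(\<Sum>j<n. z j * y j) = z i * y i"
      using i z_other by (subst sum.remove[of _ i]) (auto intro!: sum.neutral)
    ultimately show ?thesis using orth by simp
  qed
  have "m * (\<Sum>i<n. (y i)\<^sup>2) = (\<Sum>i<n. m * (y i)\<^sup>2)" by (simp add: sum_distrib_left)
  also have "\<dots> \<le> (\<Sum>i<n. ds ! i * (y i)\<^sup>2)"
    by (rule sum_mono) (use y_zero in \<open>force intro: mult_right_mono\<close>)
  finally show ?thesis unfolding m_def .
qed

lemma diagonal_mat_mult_vec_index:
  assumes D: "D \<in> carrier_mat n n" "diagonal_mat D" and y: "y \<in> carrier_vec n" and i: "i < n"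
  shows "(D *\<^sub>v y) $ i = D $$ (i, i) * y $ i"
proof -
  have "(D *\<^sub>v y) $ i = (\<Sum>j\<in>{0..<n}. D $$ (i, j) * y $ j)"
    using D y i by (simp add: scalar_prod_def)
  also have "\<dots> = D $$ (i, i) * y $ i"
    using D i unfolding diagonal_mat_def by (subst sum.remove[of _ i]) (auto intro!: sum.neutral)
  finally show ?thesis .
qed

lemma orthogonal_diagonalization_quadratic_form:
  fixes D :: "real mat"
  assumes P: "orthogonal_matrix n P" and D: "D \<in> carrier_mat n n" "diagonal_mat D"
    and x: "x \<in> carrier_vec n"
  shows "((P * D * transpose_mat P) *\<^sub>v x) \<bullet> x = (\<Sum>i<n. D $$ (i, i) * ((transpose_mat P *\<^sub>v x) $ i)\<^sup>2)"
proof -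
  define y where "y = transpose_mat P *\<^sub>v x"
  have P_carrier: "P \<in> carrier_mat n n" using P unfolding orthogonal_matrix_def by auto
  have y: "y \<in> carrier_vec n" unfolding y_def using P_carrier x by simp
  have "((P * D * transpose_mat P) *\<^sub>v x) \<bullet> x = (P *\<^sub>v (D *\<^sub>v y)) \<bullet> x"
    unfolding y_def using P_carrier D x by (simp add: assoc_mult_mat_vec[of _ n n _ n])
  also have "\<dots> = (D *\<^sub>v y) \<bullet> y"
    using transpose_vec_mult_scalar[of "transpose_mat P" n n x "D *\<^sub>v y"] P_carrier D x y
    by (simp flip: y_def)
  also have "\<dots> = (\<Sum>i\<in>{0..<n}. (D *\<^sub>v y) $ i * y $ i)"
    by (simp only: scalar_prod_def carrier_vecD[OF y])
  also have "\<dots> = (\<Sum>i<n. D $$ (i, i) * (y $ i)\<^sup>2)"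
    unfolding lessThan_atLeast0 by (rule sum.cong)
      (simp_all add: diagonal_mat_mult_vec_index[OF D y] power2_eq_square del: index_mult_mat_vec)
  finally show ?thesis unfolding y_def .
qed

lemma orthogonal_diagonalization_sorted_eigenvalues:
  fixes D :: "real mat"
  assumes "orthogonal_matrix n P" and "D \<in> carrier_mat n n" "diagonal_mat D"
    and "sorted es" and "char_poly (P * D * transpose_mat P) = (\<Prod>e\<leftarrow>es. [:- e, 1:])"
  shows "es = sort (diag_mat D)"
proof (rule sorted_linear_factors_unique)
  have "(\<Prod>e\<leftarrow>es. [:- e, 1:]) = char_poly (P * D * transpose_mat P)" using assms(5) by simp
  also have "\<dots> = (\<Prod>e\<leftarrow>diag_mat D. [:- e, 1:])"
    by (rule char_poly_orthogonal_diagonalization[OF assms(1-3)])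
  also have "\<dots> = (\<Prod>e\<leftarrow>sort (diag_mat D). [:- e, 1:])" by (rule prod_linear_factors_sort[symmetric])
  finally show "(\<Prod>e\<leftarrow>es. [:- e, 1:]) = (\<Prod>e\<leftarrow>sort (diag_mat D). [:- e, 1:])" .
qed (use assms(4) in simp_all)

lemma orthogonal_diagonalization_mult_vec:
  assumes P: "orthogonal_matrix n P" and D: "D \<in> carrier_mat n n" and z: "z \<in> carrier_vec n"
  shows "transpose_mat P *\<^sub>v ((P * D * transpose_mat P) *\<^sub>v z) = D *\<^sub>v (transpose_mat P *\<^sub>v z)"
proof -
  have P_carrier: "P \<in> carrier_mat n n" and PT_P: "transpose_mat P * P = 1\<^sub>m n"
    using P unfolding orthogonal_matrix_def by auto
  have "transpose_mat P * (P * D * transpose_mat P) = (transpose_mat P * P) * D * transpose_mat P"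
    using P_carrier D by (simp add: assoc_mult_mat[of _ n n _ n _ n])
  also have "\<dots> = D * transpose_mat P" using D by (simp add: PT_P)
  finally have PT_PDPT: "transpose_mat P * (P * D * transpose_mat P) = D * transpose_mat P" .
  have "transpose_mat P *\<^sub>v ((P * D * transpose_mat P) *\<^sub>v z) = (transpose_mat P * (P * D * transpose_mat P)) *\<^sub>v z"
    by (rule assoc_mult_mat_vec[symmetric]) (use P_carrier D z in auto)
  also have "\<dots> = D *\<^sub>v (transpose_mat P *\<^sub>v z)"
    unfolding PT_PDPT by (rule assoc_mult_mat_vec) (use P_carrier D z in auto)
  finally show ?thesis .
qed

lemma psd_second_eigenvalue_le_rayleigh_quotient:
  fixes A :: "real mat"
  assumes A: "A \<in> carrier_mat n n" and sym: "transpose_mat A = A" and n: "n \<ge> 2"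
    and psd: "\<And>w. w \<in> carrier_vec n \<Longrightarrow> (A *\<^sub>v w) \<bullet> w \<ge> 0"
    and es: "sorted es" "char_poly A = (\<Prod>e\<leftarrow>es. [:- e, 1:])"
    and z: "z \<in> carrier_vec n" "z \<noteq> 0\<^sub>v n" "A *\<^sub>v z = 0\<^sub>v n"
    and x: "x \<in> carrier_vec n" "x \<bullet> z = 0"
  shows "es ! 1 * (x \<bullet> x) \<le> (A *\<^sub>v x) \<bullet> x"
proof -
  obtain P D where P: "orthogonal_matrix n P" and D: "D \<in> carrier_mat n n" "diagonal_mat D"
    and A_eq: "A = P * D * transpose_mat P"
    using real_symmetric_mat_orthogonal_diagonalization[OF A sym] .
  have P_carrier: "P \<in> carrier_mat n n" using P unfolding orthogonal_matrix_def by auto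
  define ds where "ds = diag_mat D"
  have ds: "length ds = n" "\<And>i. i < n \<Longrightarrow> ds ! i = D $$ (i, i)"
    unfolding ds_def diag_mat_def using D by auto
  have es_ds: "es = sort ds"
    unfolding ds_def by (rule orthogonal_diagonalization_sorted_eigenvalues[OF P D es(1) es(2)[unfolded A_eq]])
  have ds_nonneg: "ds ! i \<ge> 0" if "i < n" for i
  proof (rule eigenvalue_nonneg_if_psd[OF A psd])
    have "ds ! i \<in> set es" using that ds(1) es_ds by simp
    then show "eigenvalue A (ds ! i)" using linear_factor_root_eigenvalue[OF A es(2)] by blast
  qed
  define y where "y = transpose_mat P *\<^sub>v x"
  define w where "w = transpose_mat P *\<^sub>v z"
  have y: "y \<in> carrier_vec n" and w: "w \<in> carrier_vec n"
    unfolding y_def w_def using P_carrier x z by auto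
  have "D *\<^sub>v w = transpose_mat P *\<^sub>v (A *\<^sub>v z)"
    unfolding w_def A_eq by (rule orthogonal_diagonalization_mult_vec[OF P D(1) z(1), symmetric])
  also have "\<dots> = 0\<^sub>v n" using P_carrier z(3) by (intro eq_vecI) auto
  finally have "D *\<^sub>v w = 0\<^sub>v n" .
  then have ker: "ds ! i * w $ i = 0" if "i < n" for i
    using diagonal_mat_mult_vec_index[OF D w that] that ds(2) by simp
  have "w \<bullet> w = z \<bullet> z" unfolding w_def using orthogonal_matrix_scalar_prod[OF P z(1) z(1)] .
  then have "w \<noteq> 0\<^sub>v n"
    using z(1,2) conjugate_square_greater_0_vec[OF z(1)] by auto
  then have w_nonzero: "\<exists>i<n. w $ i \<noteq> 0" using w by auto
  have "(\<Sum>i<n. w $ i * y $ i) = w \<bullet> y" using w y by (simp add: scalar_prod_def lessThan_atLeast0)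
  also have "\<dots> = z \<bullet> x" unfolding w_def y_def by (rule orthogonal_matrix_scalar_prod[OF P z(1) x(1)])
  also have "\<dots> = 0" using x comm_scalar_prod[OF x(1) z(1)] by simp
  finally have orth: "(\<Sum>i<n. w $ i * y $ i) = 0" .
  have "x \<bullet> x = y \<bullet> y" unfolding y_def by (rule orthogonal_matrix_scalar_prod[OF P x(1) x(1), symmetric])
  also have "\<dots> = (\<Sum>i<n. (y $ i)\<^sup>2)"
    using y by (simp add: scalar_prod_def lessThan_atLeast0 power2_eq_square)
  finally have "x \<bullet> x = (\<Sum>i<n. (y $ i)\<^sup>2)" .
  moreover have "(A *\<^sub>v x) \<bullet> x = (\<Sum>i<n. ds ! i * (y $ i)\<^sup>2)"
    unfolding A_eq y_def using ds(2) by (simp add: orthogonal_diagonalization_quadratic_form[OF P D x(1)])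
  ultimately show ?thesis
    using second_smallest_weighted_sum_le[OF ds(1) n ds_nonneg ker w_nonzero orth] es_ds by simp
qed

section \<open>The Laplacian and the algebraic connectivity\<close>

lemma laplacian_carrier: "laplacian n E \<in> carrier_mat n n"
  unfolding laplacian_def by simp

lemma laplacian_symmetric:
  assumes "simple_graph n E"
  shows "transpose_mat (laplacian n E) = laplacian n E"
  using assms unfolding simple_graph_def laplacian_def by (intro eq_matI) auto

lemma card_nbhd_eq_sum:
  assumes G: "simple_graph n E" and T: "T \<subseteq> {0..<n}"
  shows "real (card (nbhd E T v)) = (\<Sum>j<n. if E v j \<and> j \<in> T then 1 else 0)"
proof -
  have "nbhd E T v = {j \<in> {..<n}. E v j \<and> j \<in> T}"
    using G T unfolding nbhd_def simple_graph_def by auto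
  then have "real (card (nbhd E T v)) = (\<Sum>j\<in>{j \<in> {..<n}. E v j \<and> j \<in> T}. 1)" by simp
  also have "\<dots> = (\<Sum>j<n. if E v j \<and> j \<in> T then 1 else 0)" by (subst sum.inter_filter) auto
  finally show ?thesis .
qed

lemma degree_eq_sum:
  assumes G: "simple_graph n E"
  shows "real (degree n E i) = (\<Sum>j<n. if E i j then 1 else 0)"
  unfolding degree_def card_nbhd_eq_sum[OF G order_refl] by (intro sum.cong) auto

lemma laplacian_mult_vec_index:
  assumes G: "simple_graph n E" and i: "i < n"
  shows "(laplacian n E *\<^sub>v vec n x) $ i = (\<Sum>j<n. if E i j then x i - x j else 0)"
proof -
  have "(laplacian n E *\<^sub>v vec n x) $ i = (\<Sum>j<n. laplacian n E $$ (i, j) * x j)"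
    using i laplacian_carrier[of n E] by (simp add: scalar_prod_def lessThan_atLeast0)
  also have "\<dots> = (\<Sum>j<n. (if i = j then real (degree n E i) * x j else 0) - (if E i j then x j else 0))"
    using G i unfolding laplacian_def simple_graph_def by (intro sum.cong) auto
  also have "\<dots> = real (degree n E i) * x i - (\<Sum>j<n. if E i j then x j else 0)"
    using i by (simp add: sum_subtractf)
  also have "\<dots> = (\<Sum>j<n. if E i j then x i - x j else 0)"
    unfolding degree_eq_sum[OF G] sum_distrib_right
    by (simp add: sum_subtractf[symmetric] if_distrib if_distribR cong: if_cong)
  finally show ?thesis .
qed

lemma laplacian_quadratic_form:
  assumes G: "simple_graph n E"
  shows "(laplacian n E *\<^sub>v vec n x) \<bullet> vec n x =
    (\<Sum>i<n. \<Sum>j<n. if E i j then (x i - x j)\<^sup>2 else 0) / 2"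
proof -
  define T where "T = (\<Sum>i<n. \<Sum>j<n. if E i j then (x i - x j) * x i else 0)"
  have E_sym: "E i j = E j i" for i j using G unfolding simple_graph_def by blast
  have "(laplacian n E *\<^sub>v vec n x) \<bullet> vec n x = (\<Sum>i<n. (laplacian n E *\<^sub>v vec n x) $ i * x i)"
    using laplacian_carrier[of n E] by (simp add: scalar_prod_def lessThan_atLeast0)
  also have "\<dots> = T" unfolding T_def using G
    by (intro sum.cong refl) (simp add: laplacian_mult_vec_index sum_distrib_right if_distrib if_distribR cong: if_cong)
  finally have quad_T: "(laplacian n E *\<^sub>v vec n x) \<bullet> vec n x = T" .
  \<comment> \<open>Symmetrize: each edge is counted from both of its ends.\<close>
  have "T = (\<Sum>i<n. \<Sum>j<n. if E i j then (x j - x i) * x j else 0)"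
    unfolding T_def by (subst sum.swap) (simp add: E_sym)
  then have "T + T = (\<Sum>i<n. \<Sum>j<n. (if E i j then (x i - x j) * x i else 0) +
      (if E i j then (x j - x i) * x j else 0))"
    by (simp add: T_def sum.distrib)
  also have "\<dots> = (\<Sum>i<n. \<Sum>j<n. if E i j then (x i - x j)\<^sup>2 else 0)"
    by (intro sum.cong refl) (simp add: power2_eq_square algebra_simps)
  finally have "T + T = (\<Sum>i<n. \<Sum>j<n. if E i j then (x i - x j)\<^sup>2 else 0)" .
  with quad_T show ?thesis by simp
qed

lemma laplacian_psd:
  assumes G: "simple_graph n E" and w: "w \<in> carrier_vec n"
  shows "(laplacian n E *\<^sub>v w) \<bullet> w \<ge> 0"
proof -
  have "w = vec n (\<lambda>i. w $ i)" using w by auto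
  then have "(laplacian n E *\<^sub>v w) \<bullet> w = (\<Sum>i<n. \<Sum>j<n. if E i j then (w $ i - w $ j)\<^sup>2 else 0) / 2"
    using laplacian_quadratic_form[OF G, of "\<lambda>i. w $ i"] by simp
  also have "\<dots> \<ge> 0" by (intro divide_nonneg_pos sum_nonneg) auto
  finally show ?thesis .
qed

lemma laplacian_mult_ones:
  assumes "simple_graph n E"
  shows "laplacian n E *\<^sub>v vec n (\<lambda>_. 1) = 0\<^sub>v n"
  using laplacian_mult_vec_index[OF assms] laplacian_carrier[of n E] by (intro eq_vecI) auto

lemma laplacian_spectrum:
  assumes "simple_graph n E"
  shows "sorted (laplacian_spectrum n E)"
    and "char_poly (laplacian n E) = (\<Prod>e\<leftarrow>laplacian_spectrum n E. [:- e, 1:])"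
  using theI'[OF real_symmetric_mat_char_poly_sorted_factors[OF laplacian_carrier laplacian_symmetric[OF assms]]]
  unfolding laplacian_spectrum_def by auto

lemma algebraic_connectivity_nonneg:
  assumes G: "simple_graph n E" and n: "n \<ge> 2"
  shows "algebraic_connectivity n E \<ge> 0"
proof (rule eigenvalue_nonneg_if_psd[OF laplacian_carrier laplacian_psd[OF G]])
  have "length (laplacian_spectrum n E) = n"
    using degree_monic_char_poly[OF laplacian_carrier[of n E]] laplacian_spectrum(2)[OF G]
    by (simp add: degree_linear_factors)
  then have "algebraic_connectivity n E \<in> set (laplacian_spectrum n E)"
    unfolding algebraic_connectivity_def using n by simp
  then show "eigenvalue (laplacian n E) (algebraic_connectivity n E)"
    by (rule linear_factor_root_eigenvalue[OF laplacian_carrier laplacian_spectrum(2)[OF G]])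
qed

lemma algebraic_connectivity_le_rayleigh_quotient:
  assumes G: "simple_graph n E" and n: "n \<ge> 2"
    and x: "x \<in> carrier_vec n" "x \<bullet> vec n (\<lambda>_. 1) = 0"
  shows "algebraic_connectivity n E * (x \<bullet> x) \<le> (laplacian n E *\<^sub>v x) \<bullet> x"
proof -
  have "vec n (\<lambda>_. 1) $ 0 \<noteq> (0\<^sub>v n :: real vec) $ 0" using n by simp
  then have ones: "vec n (\<lambda>_. 1) \<in> carrier_vec n" "vec n (\<lambda>_. 1) \<noteq> (0\<^sub>v n :: real vec)" by auto
  show ?thesis unfolding algebraic_connectivity_def
    by (rule psd_second_eigenvalue_le_rayleigh_quotient[OF laplacian_carrier laplacian_symmetric[OF G] n
          laplacian_psd[OF G] laplacian_spectrum[OF G] ones laplacian_mult_ones[OF G] x])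
qed

section \<open>Defensive alliances\<close>

definition cut_vector :: "nat \<Rightarrow> nat set \<Rightarrow> real vec" where
  "cut_vector n S = vec n (\<lambda>i. (if i \<in> S then 1 else 0) - real (card S) / real n)"

lemma sum_indicator_lessThan:
  fixes S :: "nat set"
  assumes "S \<subseteq> {0..<n}"
  shows "(\<Sum>i<n. if i \<in> S then 1 else 0) = real (card S)"
proof -
  have "{..<n} \<inter> S = S" using assms by auto
  then show ?thesis using sum.inter_restrict[of "{..<n}" "\<lambda>_. 1 :: real" S] by simp
qed

lemma cut_vector_orthogonal_ones:
  assumes "S \<subseteq> {0..<n}" and "n > 0"
  shows "cut_vector n S \<bullet> vec n (\<lambda>_. 1) = 0"
proof -
  have "cut_vector n S \<bullet> vec n (\<lambda>_. 1) = (\<Sum>i<n. (if i \<in> S then 1 else 0) - real (card S) / real n)"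
    unfolding cut_vector_def by (simp add: scalar_prod_def lessThan_atLeast0)
  also have "\<dots> = 0" using assms by (simp add: sum_subtractf sum_indicator_lessThan)
  finally show ?thesis .
qed

lemma cut_vector_norm:
  assumes "S \<subseteq> {0..<n}" and "n > 0"
  shows "cut_vector n S \<bullet> cut_vector n S = real (card S) * (real n - real (card S)) / real n"
proof -
  define c where "c = real (card S) / real n"
  have "cut_vector n S \<bullet> cut_vector n S = (\<Sum>i<n. (if i \<in> S then 1 else 0) * (1 - 2 * c) + c\<^sup>2)"
    unfolding cut_vector_def c_def[symmetric]
    by (auto simp: scalar_prod_def lessThan_atLeast0 power2_eq_square algebra_simps intro!: sum.cong)
  also have "\<dots> = real (card S) * (1 - 2 * c) + real n * c\<^sup>2"
    using assms(1) by (simp add: sum.distrib sum_distrib_right[symmetric] sum_indicator_lessThan)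
  also have "\<dots> = real (card S) * (real n - real (card S)) / real n"
    unfolding c_def using assms(2) by (simp add: field_simps power2_eq_square)
  finally show ?thesis .
qed

lemma laplacian_quadratic_form_cut_vector:
  assumes G: "simple_graph n E" and S: "S \<subseteq> {0..<n}"
  shows "(laplacian n E *\<^sub>v cut_vector n S) \<bullet> cut_vector n S =
    (\<Sum>v\<in>S. real (card (nbhd E ({0..<n} - S) v)))"
proof -
  define f where "f i = (if i \<in> S then 1 else 0) - real (card S) / real n" for i
  define g where "g i j = (if E i j \<and> i \<in> S \<and> j \<notin> S then 1 else 0 :: real)" for i j
  have E_sym: "E i j = E j i" for i j using G unfolding simple_graph_def by blast
  have "(\<Sum>i<n. \<Sum>j<n. if E i j then (f i - f j)\<^sup>2 else 0) = (\<Sum>i<n. \<Sum>j<n. g i j + g j i)"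
    by (intro sum.cong refl) (auto simp: f_def g_def E_sym)
  also have "\<dots> = 2 * (\<Sum>i<n. \<Sum>j<n. g i j)"
    by (simp add: sum.distrib sum.swap[of "\<lambda>i j. g j i"])
  also have "(\<Sum>i<n. \<Sum>j<n. g i j) = (\<Sum>i\<in>S. \<Sum>j<n. if E i j \<and> j \<in> {0..<n} - S then 1 else 0)"
    using S unfolding g_def by (subst sum.subset_diff[of S]) (auto intro!: sum.cong sum.neutral)
  also have "\<dots> = (\<Sum>v\<in>S. real (card (nbhd E ({0..<n} - S) v)))"
    using card_nbhd_eq_sum[OF G, of "{0..<n} - S"] by simp
  finally show ?thesis
    using laplacian_quadratic_form[OF G, of f] unfolding cut_vector_def f_def by simp
qed

lemma cut_inequality_rearranged:
  fixes \<mu> s t N :: real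
  assumes "\<mu> \<ge> 0" and "s > 0" and "N > 0" and "\<mu> * (s * (N - s)) / N \<le> s * (s - t)"
  shows "N * (\<mu> + t) / (N + \<mu>) \<le> s"
proof -
  have "\<mu> * (s * (N - s)) \<le> s * (s - t) * N" using assms(3,4) by (simp add: divide_le_eq)
  then have "s * (\<mu> * (N - s)) \<le> s * ((s - t) * N)" by (simp add: algebra_simps)
  then have "\<mu> * (N - s) \<le> (s - t) * N" using assms(2) by (simp add: mult_le_cancel_left)
  then have "N * (\<mu> + t) \<le> s * (N + \<mu>)" by (simp add: algebra_simps)
  then show ?thesis using assms(1,3) by (simp add: divide_le_eq)
qed

lemma card_ge_if_boundary_bounded:
  assumes G: "simple_graph n E" and n: "n \<ge> 2" and S: "S \<subseteq> {0..<n}" "S \<noteq> {}"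
    and bound: "\<And>v. v \<in> S \<Longrightarrow> card (nbhd E ({0..<n} - S) v) + t \<le> card S"
  shows "real n * (algebraic_connectivity n E + real t) / (real n + algebraic_connectivity n E) \<le> real (card S)"
proof -
  define \<mu> where "\<mu> = algebraic_connectivity n E"
  define s where "s = real (card S)"
  have \<mu>: "\<mu> \<ge> 0" unfolding \<mu>_def by (rule algebraic_connectivity_nonneg[OF G n])
  have s: "s > 0" unfolding s_def using S finite_subset[OF S(1)] by (simp add: card_gt_0_iff)
  have "\<mu> * (s * (real n - s) / real n) = \<mu> * (cut_vector n S \<bullet> cut_vector n S)"
    unfolding s_def using S n by (simp add: cut_vector_norm)
  also have "\<dots> \<le> (laplacian n E *\<^sub>v cut_vector n S) \<bullet> cut_vector n S"
    unfolding \<mu>_def using S n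
    by (intro algebraic_connectivity_le_rayleigh_quotient[OF G n] cut_vector_orthogonal_ones)
      (auto simp: cut_vector_def)
  also have "\<dots> = (\<Sum>v\<in>S. real (card (nbhd E ({0..<n} - S) v)))"
    by (rule laplacian_quadratic_form_cut_vector[OF G S(1)])
  also have "\<dots> \<le> (\<Sum>v\<in>S. s - real t)"
    unfolding s_def using bound by (intro sum_mono) (simp add: le_diff_eq flip: of_nat_add)
  also have "\<dots> = s * (s - real t)" unfolding s_def by simp
  finally have "\<mu> * (s * (real n - s)) / real n \<le> s * (s - real t)" by simp
  then show ?thesis unfolding \<mu>_def[symmetric] s_def[symmetric]
    using \<mu> s n by (intro cut_inequality_rearranged) auto
qed

lemma card_nbhd_less_card:
  assumes "simple_graph n E" and "finite S" and "v \<in> S"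
  shows "card (nbhd E S v) < card S"
proof -
  have "nbhd E S v \<subseteq> S - {v}" using assms(1) unfolding nbhd_def simple_graph_def by auto
  then have "card (nbhd E S v) \<le> card (S - {v})" using assms(2) by (intro card_mono) auto
  also have "\<dots> < card S" using assms(2,3) by (rule card_Diff1_less)
  finally show ?thesis .
qed

lemma defensive_alliance_boundary_le:
  assumes G: "simple_graph n E" and S: "defensive_alliance n E S" and v: "v \<in> S"
  shows "card (nbhd E ({0..<n} - S) v) \<le> card S"
proof -
  have "finite S" using S finite_subset unfolding defensive_alliance_def by blast
  then have "card (nbhd E S v) < card S" using card_nbhd_less_card[OF G _ v] by blast
  moreover have "card (nbhd E ({0..<n} - S) v) \<le> card (nbhd E S v) + 1"
    using S v unfolding defensive_alliance_def by blast
  ultimately show ?thesis by linarith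
qed

lemma strong_defensive_alliance_boundary_less:
  assumes G: "simple_graph n E" and S: "strong_defensive_alliance n E S" and v: "v \<in> S"
  shows "card (nbhd E ({0..<n} - S) v) < card S"
proof -
  have "finite S" using S finite_subset unfolding strong_defensive_alliance_def by blast
  then have "card (nbhd E S v) < card S" using card_nbhd_less_card[OF G _ v] by blast
  moreover have "card (nbhd E ({0..<n} - S) v) \<le> card (nbhd E S v)"
    using S v unfolding strong_defensive_alliance_def by blast
  ultimately show ?thesis by linarith
qed

lemma Min_card_attained:
  assumes "\<And>S. P S \<Longrightarrow> S \<subseteq> A" and "finite A" and "P A"
  obtains S where "P S" and "Min {card S | S. P S} = card S"
proof -
  have "{card S | S. P S} \<subseteq> card ` Pow A" using assms(1) by blast
  then have "finite {card S | S. P S}" by (rule finite_subset) (simp add: assms(2))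
  moreover have "{card S | S. P S} \<noteq> {}" using assms(3) by blast
  ultimately have "Min {card S | S. P S} \<in> {card S | S. P S}" by (rule Min_in)
  then show thesis using that by blast
qed

lemma alliance_number_attained:
  assumes "n > 0"
  obtains S where "defensive_alliance n E S" and "alliance_number n E = card S"
proof -
  have "\<And>S. defensive_alliance n E S \<Longrightarrow> S \<subseteq> {0..<n}" by (simp add: defensive_alliance_def)
  moreover have "defensive_alliance n E {0..<n}" using assms by (simp add: defensive_alliance_def nbhd_def)
  ultimately obtain S where "defensive_alliance n E S" "Min {card S | S. defensive_alliance n E S} = card S"
    by (rule Min_card_attained[OF _ finite_atLeastLessThan])
  then show thesis unfolding alliance_number_def[symmetric] by (rule that)
qed

lemma strong_alliance_number_attained:
  assumes "n > 0"
  obtains S where "strong_defensive_alliance n E S" and "strong_alliance_number n E = card S"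
proof -
  have "\<And>S. strong_defensive_alliance n E S \<Longrightarrow> S \<subseteq> {0..<n}" by (simp add: strong_defensive_alliance_def)
  moreover have "strong_defensive_alliance n E {0..<n}" using assms by (simp add: strong_defensive_alliance_def nbhd_def)
  ultimately obtain S where "strong_defensive_alliance n E S" "Min {card S | S. strong_defensive_alliance n E S} = card S"
    by (rule Min_card_attained[OF _ finite_atLeastLessThan])
  then show thesis unfolding strong_alliance_number_def[symmetric] by (rule that)
qed

theorem theorem1:
  fixes n :: nat and E :: "nat \<Rightarrow> nat \<Rightarrow> bool"
  assumes "simple_graph n E" and "n \<ge> 2"
  defines "\<mu> \<equiv> algebraic_connectivity n E"
  shows "int (alliance_number n E) \<ge> \<lceil>real n * \<mu> / (real n + \<mu>)\<rceil> \<and>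
         int (strong_alliance_number n E) \<ge> \<lceil>real n * (\<mu> + 1) / (real n + \<mu>)\<rceil>"
proof -
  note G = assms(1) and n = assms(2)
  obtain S where S: "defensive_alliance n E S" and a: "alliance_number n E = card S"
    using alliance_number_attained n by (metis zero_less_numeral order_less_le_trans)
  obtain T where T: "strong_defensive_alliance n E T" and sa: "strong_alliance_number n E = card T"
    using strong_alliance_number_attained n by (metis zero_less_numeral order_less_le_trans)
  have "real n * (\<mu> + real 0) / (real n + \<mu>) \<le> real (card S)"
    unfolding \<mu>_def by (rule card_ge_if_boundary_bounded[OF G n])
      (use S defensive_alliance_boundary_le[OF G S] in \<open>simp_all add: defensive_alliance_def\<close>)
  moreover have "real n * (\<mu> + real 1) / (real n + \<mu>) \<le> real (card T)"
    unfolding \<mu>_def by (rule card_ge_if_boundary_bounded[OF G n])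
      (use T strong_defensive_alliance_boundary_less[OF G T] in \<open>simp_all add: strong_defensive_alliance_def Suc_le_eq\<close>)
  ultimately show ?thesis unfolding a sa by (simp add: ceiling_le_iff)
qed

end
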